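(* Let $\phi$ be a continuous-time random dynamical system and for $h>0$ let $\varphi_h(\omega)=\phi(h,\omega)$ be its time-$h$ map, generating the discrete random dynamical system $\varphi_h^k(\omega)=\phi(kh,\omega)$, $k\in\mathbb Z$, over $\theta_h$. Suppose there exists $\delta>0$ such that for every $h\in(0,\delta]$, the random set $S$ is a random isolated invariant set of $\varphi_h$. Then $S$ is a random isolated invariant set of $\phi$.
   Context: Let $(\Omega,\mathscr F,\mathbb P)$ be a probability space with a measurable flow $(\theta_t)_{t\in\mathbb R}$ preserving $\mathbb P$, and $(X,d_X)$ a locally compact separable complete metric space. A continuous-time random dynamical system is a measurable map $\phi:\mathbb R\times\Omega\times X\to X$ with $(t,x)\mapsto\phi(t,\omega,x)$ continuous for each $\omega$, $\phi(0,\omega)=\mathrm{id}_X$ and $\phi(t+s,\omega)=\phi(t,\theta_s\omega)\circ\phi(s,\omega)$ for all $t,s,\omega$. A multifunction $D$ with compact values is a random compact set if $\omega\mapsto\mathrm{dist}_X(x,D(\omega))$ is measurable for each $x$. For a random compact set $N$ and the time set $\mathbb T=\mathbb R$ (for $\phi$) or $\mathbb T=h\mathbb Z$ (for $\varphi_h$), $\mathrm{Inv}N(\omega)=\{x\in N(\omega):\phi(t,\omega,x)\in N(\theta_t\omega)\ \forall t\in\mathbb T\}$; $N$ is a random isolating neighborhood if $\mathrm{Inv}N(\omega)\subset\mathrm{int}N(\omega)$, and $S$ is a random isolated invariant set if $S=\mathrm{Inv}N$ for some random isolating neighborhood $N$. *)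

theory Defs
  imports "HOL-Probability.Probability"
begin

definition metric_dyn_system :: "'w measure \<Rightarrow> (real \<Rightarrow> 'w \<Rightarrow> 'w) \<Rightarrow> bool" where
  "metric_dyn_system M \<theta> \<longleftrightarrow>
     prob_space M \<and>
     (\<lambda>(t, \<omega>). \<theta> t \<omega>) \<in> (borel \<Otimes>\<^sub>M M) \<rightarrow>\<^sub>M M \<and>
     (\<forall>\<omega>\<in>space M. \<theta> 0 \<omega> = \<omega>) \<and>
     (\<forall>t s. \<forall>\<omega>\<in>space M. \<theta> (t + s) \<omega> = \<theta> t (\<theta> s \<omega>)) \<and>
     (\<forall>t. \<theta> t \<in> M \<rightarrow>\<^sub>M M \<and> distr M M (\<theta> t) = M)"

definition RDS :: "'w measure \<Rightarrow> (real \<Rightarrow> 'w \<Rightarrow> 'w) \<Rightarrow> (real \<Rightarrow> 'w \<Rightarrow> 'a::metric_space \<Rightarrow> 'a) \<Rightarrow> bool" where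
  "RDS M \<theta> \<phi> \<longleftrightarrow>
     (\<lambda>(t, \<omega>, x). \<phi> t \<omega> x) \<in> (borel \<Otimes>\<^sub>M M \<Otimes>\<^sub>M borel) \<rightarrow>\<^sub>M borel \<and>
     (\<forall>\<omega>\<in>space M. continuous_on UNIV (\<lambda>(t, x). \<phi> t \<omega> x)) \<and>
     (\<forall>\<omega>\<in>space M. \<forall>x. \<phi> 0 \<omega> x = x) \<and>
     (\<forall>t s. \<forall>\<omega>\<in>space M. \<forall>x. \<phi> (t + s) \<omega> x = \<phi> t (\<theta> s \<omega>) (\<phi> s \<omega> x))"

definition random_compact_set :: "'w measure \<Rightarrow> ('w \<Rightarrow> 'a::metric_space set) \<Rightarrow> bool" where
  "random_compact_set M D \<longleftrightarrow>
     (\<forall>\<omega>\<in>space M. compact (D \<omega>)) \<and>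
     (\<forall>x. (\<lambda>\<omega>. infdist x (D \<omega>)) \<in> borel_measurable M)"

definition Inv :: "real set \<Rightarrow> (real \<Rightarrow> 'w \<Rightarrow> 'w) \<Rightarrow> (real \<Rightarrow> 'w \<Rightarrow> 'a \<Rightarrow> 'a) \<Rightarrow> ('w \<Rightarrow> 'a set) \<Rightarrow> 'w \<Rightarrow> 'a set" where
  "Inv T \<theta> \<phi> N \<omega> = {x \<in> N \<omega>. \<forall>t\<in>T. \<phi> t \<omega> x \<in> N (\<theta> t \<omega>)}"

definition random_isolating_nbhd :: "'w measure \<Rightarrow> real set \<Rightarrow> (real \<Rightarrow> 'w \<Rightarrow> 'w) \<Rightarrow> (real \<Rightarrow> 'w \<Rightarrow> 'a::metric_space \<Rightarrow> 'a) \<Rightarrow> ('w \<Rightarrow> 'a set) \<Rightarrow> bool" where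
  "random_isolating_nbhd M T \<theta> \<phi> N \<longleftrightarrow>
     random_compact_set M N \<and> (\<forall>\<omega>\<in>space M. Inv T \<theta> \<phi> N \<omega> \<subseteq> interior (N \<omega>))"

definition random_isolated_invariant_set :: "'w measure \<Rightarrow> real set \<Rightarrow> (real \<Rightarrow> 'w \<Rightarrow> 'w) \<Rightarrow> (real \<Rightarrow> 'w \<Rightarrow> 'a::metric_space \<Rightarrow> 'a) \<Rightarrow> ('w \<Rightarrow> 'a set) \<Rightarrow> bool" where
  "random_isolated_invariant_set M T \<theta> \<phi> S \<longleftrightarrow>
     (\<exists>N. random_isolating_nbhd M T \<theta> \<phi> N \<and> (\<forall>\<omega>\<in>space M. S \<omega> = Inv T \<theta> \<phi> N \<omega>))"

text \<open>The time set h*Z of the time-h map.\<close>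
definition hZ :: "real \<Rightarrow> real set" where
  "hZ h = {h * of_int k | k. True}"

end

theory Submission
  imports Defs
begin

text \<open>
  Every time \<open>t\<close> lies in \<open>h\<int>\<close> for some \<open>h \<in> (0, \<delta>]\<close>, and a set of the form \<open>Inv (h\<int>) N\<close>
  is invariant under the time-\<open>h\<close> map, because \<open>h\<int>\<close> is closed under addition.
  Hence \<open>S\<close> is invariant under the whole flow. For a single isolating neighbourhood \<open>N\<close> of
  the time-\<open>\<delta>\<close> map this squeezes \<open>S \<subseteq> Inv \<real> N \<subseteq> Inv (\<delta>\<int>) N = S\<close>, so \<open>N\<close> also
  isolates \<open>S\<close> for the flow.
\<close>

lemma metric_dyn_system_in_space:
  "metric_dyn_system M \<theta> \<Longrightarrow> \<omega> \<in> space M \<Longrightarrow> \<theta> t \<omega> \<in> space M"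
  unfolding metric_dyn_system_def by (meson measurable_space)

lemma metric_dyn_system_add:
  "metric_dyn_system M \<theta> \<Longrightarrow> \<omega> \<in> space M \<Longrightarrow> \<theta> (s + t) \<omega> = \<theta> s (\<theta> t \<omega>)"
  unfolding metric_dyn_system_def by blast

lemma RDS_cocycle:
  "RDS M \<theta> \<phi> \<Longrightarrow> \<omega> \<in> space M \<Longrightarrow> \<phi> (s + t) \<omega> x = \<phi> s (\<theta> t \<omega>) (\<phi> t \<omega> x)"
  unfolding RDS_def by blast

lemma hZ_add_closed:
  assumes "s \<in> hZ h" "t \<in> hZ h"
  shows "s + t \<in> hZ h"
proof -
  obtain i j where "s = h * of_int i" "t = h * of_int j"
    using assms unfolding hZ_def by auto
  then have "s + t = h * of_int (i + j)"
    by (simp add: algebra_simps)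
  then show ?thesis
    unfolding hZ_def by blast
qed

lemma ex_hZ_mem:
  fixes t \<delta> :: real
  assumes "\<delta> > 0"
  shows "\<exists>h\<in>{0<..\<delta>}. t \<in> hZ h"
proof (cases "t = 0")
  case True
  then have "t = \<delta> * of_int 0" by simp
  then show ?thesis
    using assms unfolding hZ_def by auto
next
  case False
  define n where "n = nat \<lceil>\<bar>t\<bar> / \<delta>\<rceil>"
  define h where "h = \<bar>t\<bar> / real n"
  have "\<bar>t\<bar> / \<delta> \<le> real n"
    unfolding n_def by linarith
  moreover have "\<bar>t\<bar> / \<delta> > 0"
    using False assms by simp
  ultimately have n_pos: "real n > 0"
    by linarith
  from \<open>\<bar>t\<bar> / \<delta> \<le> real n\<close> have "\<bar>t\<bar> \<le> real n * \<delta>"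
    using assms by (simp add: pos_divide_le_eq)
  with n_pos have "h \<in> {0<..\<delta>}"
    using False unfolding h_def by (auto simp: field_simps)
  moreover have "t = h * of_int (if t > 0 then int n else - int n)"
    using n_pos unfolding h_def by (auto simp: field_simps)
  then have "t \<in> hZ h"
    unfolding hZ_def by blast
  ultimately show ?thesis by blast
qed

lemma Inv_forward_invariant:
  assumes add_closed: "\<And>s. s \<in> T \<Longrightarrow> s + t \<in> T"
    and flow: "\<And>s. \<theta> (s + t) \<omega> = \<theta> s (\<theta> t \<omega>)"
    and cocycle: "\<And>s. \<phi> (s + t) \<omega> x = \<phi> s (\<theta> t \<omega>) (\<phi> t \<omega> x)"
    and "t \<in> T" "x \<in> Inv T \<theta> \<phi> N \<omega>"
  shows "\<phi> t \<omega> x \<in> Inv T \<theta> \<phi> N (\<theta> t \<omega>)"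
proof -
  have x: "x \<in> N \<omega>" "\<And>s. s \<in> T \<Longrightarrow> \<phi> s \<omega> x \<in> N (\<theta> s \<omega>)"
    using \<open>x \<in> Inv T \<theta> \<phi> N \<omega>\<close> unfolding Inv_def by auto
  have "\<phi> s (\<theta> t \<omega>) (\<phi> t \<omega> x) \<in> N (\<theta> s (\<theta> t \<omega>))" if "s \<in> T" for s
    using x(2)[OF add_closed[OF that]] by (simp only: flow cocycle)
  with x(2)[OF \<open>t \<in> T\<close>] show ?thesis
    unfolding Inv_def by blast
qed

lemma random_isolated_invariant_set_hZ_invariant:
  assumes "metric_dyn_system M \<theta>" "RDS M \<theta> \<phi>"
    and "random_isolated_invariant_set M (hZ h) \<theta> \<phi> S"
    and "\<omega> \<in> space M" "t \<in> hZ h" "x \<in> S \<omega>"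
  shows "\<phi> t \<omega> x \<in> S (\<theta> t \<omega>)"
proof -
  obtain N where S_eq: "\<forall>\<omega>\<in>space M. S \<omega> = Inv (hZ h) \<theta> \<phi> N \<omega>"
    using assms(3) unfolding random_isolated_invariant_set_def by blast
  have "\<phi> t \<omega> x \<in> Inv (hZ h) \<theta> \<phi> N (\<theta> t \<omega>)"
  proof (rule Inv_forward_invariant)
    show "\<theta> (s + t) \<omega> = \<theta> s (\<theta> t \<omega>)" for s
      using assms(1,4) by (rule metric_dyn_system_add)
    show "\<phi> (s + t) \<omega> x = \<phi> s (\<theta> t \<omega>) (\<phi> t \<omega> x)" for s
      using assms(2,4) by (rule RDS_cocycle)
    show "x \<in> Inv (hZ h) \<theta> \<phi> N \<omega>"
      using S_eq assms(4,6) by blast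
  qed (use assms(5) hZ_add_closed in auto)
  then show ?thesis
    using S_eq metric_dyn_system_in_space[OF assms(1,4)] by simp
qed

lemma Inv_antimono: "T \<subseteq> T' \<Longrightarrow> Inv T' \<theta> \<phi> N \<omega> \<subseteq> Inv T \<theta> \<phi> N \<omega>"
  unfolding Inv_def by auto

lemma random_isolated_invariant_set_UNIV_if_invariant:
  assumes iso: "random_isolated_invariant_set M T \<theta> \<phi> S"
    and in_space: "\<And>t \<omega>. \<omega> \<in> space M \<Longrightarrow> \<theta> t \<omega> \<in> space M"
    and invariant: "\<And>t \<omega> x. \<omega> \<in> space M \<Longrightarrow> x \<in> S \<omega> \<Longrightarrow> \<phi> t \<omega> x \<in> S (\<theta> t \<omega>)"
  shows "random_isolated_invariant_set M UNIV \<theta> \<phi> S"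
proof -
  obtain N where N: "random_isolating_nbhd M T \<theta> \<phi> N"
    and S_eq: "\<forall>\<omega>\<in>space M. S \<omega> = Inv T \<theta> \<phi> N \<omega>"
    using iso unfolding random_isolated_invariant_set_def by blast
  have S_sub_N: "S \<omega> \<subseteq> N \<omega>" if "\<omega> \<in> space M" for \<omega>
    using S_eq that unfolding Inv_def by auto
  have Inv_UNIV_eq: "Inv UNIV \<theta> \<phi> N \<omega> = Inv T \<theta> \<phi> N \<omega>" if \<omega>: "\<omega> \<in> space M" for \<omega>
  proof
    show "Inv UNIV \<theta> \<phi> N \<omega> \<subseteq> Inv T \<theta> \<phi> N \<omega>"
      by (rule Inv_antimono) simp
    show "Inv T \<theta> \<phi> N \<omega> \<subseteq> Inv UNIV \<theta> \<phi> N \<omega>"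
    proof
      fix x
      assume "x \<in> Inv T \<theta> \<phi> N \<omega>"
      then have "x \<in> S \<omega>"
        using S_eq \<omega> by blast
      then have "\<phi> t \<omega> x \<in> N (\<theta> t \<omega>)" for t
        using invariant S_sub_N in_space \<omega> by blast
      with \<open>x \<in> S \<omega>\<close> S_sub_N \<omega> show "x \<in> Inv UNIV \<theta> \<phi> N \<omega>"
        unfolding Inv_def by blast
    qed
  qed
  then have "random_isolating_nbhd M UNIV \<theta> \<phi> N"
    using N unfolding random_isolating_nbhd_def by simp
  with S_eq Inv_UNIV_eq show ?thesis
    unfolding random_isolated_invariant_set_def by auto
qed

theorem mainTheorem12:
  fixes M :: "'w measure" and \<theta> :: "real \<Rightarrow> 'w \<Rightarrow> 'w"
    and \<phi> :: "real \<Rightarrow> 'w \<Rightarrow> 'a::polish_space \<Rightarrow> 'a"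
    and S :: "'w \<Rightarrow> 'a set"
  assumes "metric_dyn_system M \<theta>"
    and "locally_compact_space (euclidean :: 'a topology)"
    and "RDS M \<theta> \<phi>"
    and "\<exists>\<delta>>0. \<forall>h\<in>{0<..\<delta>}. random_isolated_invariant_set M (hZ h) \<theta> \<phi> S"
  shows "random_isolated_invariant_set M UNIV \<theta> \<phi> S"
proof -
  obtain \<delta> where "\<delta> > 0"
    and iso: "\<And>h. h \<in> {0<..\<delta>} \<Longrightarrow> random_isolated_invariant_set M (hZ h) \<theta> \<phi> S"
    using assms(4) by blast
  have invariant: "\<phi> t \<omega> x \<in> S (\<theta> t \<omega>)" if "\<omega> \<in> space M" "x \<in> S \<omega>" for t \<omega> x
  proof -
    obtain h where "h \<in> {0<..\<delta>}" "t \<in> hZ h"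
      using ex_hZ_mem \<open>\<delta> > 0\<close> by blast
    then show ?thesis
      using random_isolated_invariant_set_hZ_invariant[OF assms(1,3) iso] that by blast
  qed
  show ?thesis
    using iso[of \<delta>] \<open>\<delta> > 0\<close> metric_dyn_system_in_space[OF assms(1)] invariant
    by (intro random_isolated_invariant_set_UNIV_if_invariant) auto
qed

end
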